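(* Let $n\ge1$, $r\ge0$ an integer, and $g,h$ formal power series in one variable. Then $$\int\mathcal{D}_n(\psi,\bar\psi)\,(\bar\psi,\psi)^r\,\exp\!\Big[h\big((\bar\psi,\psi)\big)+(\bar\psi,J\psi)\,g\big((\bar\psi,\psi)\big)\Big]=\int\mathcal{D}_n(\psi,\bar\psi)\,(\bar\psi,\psi)^r\,e^{h((\bar\psi,\psi))}\Big[1+(\bar\psi,\psi)\,g\big((\bar\psi,\psi)\big)\Big].$$
   Context: Grassmann algebra over $\mathbb{C}$ generated by anticommuting $\psi_1,\dots,\psi_n,\bar\psi_1,\dots,\bar\psi_n$; $\int\mathcal{D}_n(\psi,\bar\psi)$ is the Berezin integral returning the coefficient of $\prod_{i=1}^n(\bar\psi_i\psi_i)$ (convention $\int d\bar\psi_i d\psi_i\,\bar\psi_i\psi_i=1$). $(\bar\psi,\psi):=\sum_{i=1}^n\bar\psi_i\psi_i$ and $(\bar\psi,J\psi):=\sum_{i,j=1}^n\bar\psi_i\psi_j$, where $J$ is the $n\times n$ all-ones matrix. Functions of the nilpotent even elements are defined by their (terminating) power series. *)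

theory Defs
  imports Complex_Main "HOL-Computational_Algebra.Formal_Power_Series"
begin

text \<open>Grassmann algebra over the complex numbers with generators e_0, e_1, e_2, ...
  (indexed by nat). An element is given by its coefficient function on monomials:
  a finite set S = {s1 < ... < sk} of generator indices stands for the ordered
  monomial e_s1 e_s2 ... e_sk.\<close>

type_synonym grass = "nat set \<Rightarrow> complex"

definition gzero :: grass where "gzero = (\<lambda>S. 0)"
definition gone :: grass where "gone = (\<lambda>S. if S = {} then 1 else 0)"
definition gen :: "nat \<Rightarrow> grass" where "gen i = (\<lambda>S. if S = {i} then 1 else 0)"
definition gadd :: "grass \<Rightarrow> grass \<Rightarrow> grass" where "gadd x y = (\<lambda>S. x S + y S)"
definition gscale :: "complex \<Rightarrow> grass \<Rightarrow> grass" where "gscale c x = (\<lambda>S. c * x S)"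

text \<open>Sign of reordering e_A e_B (A, B disjoint, each ordered) into the ordered monomial e_(A union B).\<close>
definition reorder_sign :: "nat set \<Rightarrow> nat set \<Rightarrow> complex" where
  "reorder_sign A B = (-1) ^ card {(a, b). a \<in> A \<and> b \<in> B \<and> b < a}"

definition gmult :: "grass \<Rightarrow> grass \<Rightarrow> grass" where
  "gmult x y = (\<lambda>S. \<Sum>A\<in>Pow S. reorder_sign A (S - A) * x A * y (S - A))"

primrec gpow :: "grass \<Rightarrow> nat \<Rightarrow> grass" where
  "gpow x 0 = gone"
| "gpow x (Suc k) = gmult x (gpow x k)"

definition gnil :: "grass \<Rightarrow> grass" where "gnil x = (\<lambda>S. if S = {} then 0 else x S)"

text \<open>Application of a formal power series to an element without scalar part: the
  power series terminates; the coefficient of the monomial S only receives contributions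
  from powers k \<le> card S.\<close>
definition fps_app :: "complex fps \<Rightarrow> grass \<Rightarrow> grass" where
  "fps_app f x = (\<lambda>S. \<Sum>k\<le>card S. fps_nth f k * gpow x k S)"

text \<open>Exponential of an even element: exp(c + N) = e^c * sum_k N^k/k!, N nilpotent.\<close>
definition gexp :: "grass \<Rightarrow> grass" where
  "gexp x = (\<lambda>S. exp (x {}) * (\<Sum>k\<le>card S. gpow (gnil x) k S / of_nat (fact k)))"

definition psibar :: "nat \<Rightarrow> grass" where "psibar i = gen (2 * i)"
definition psi :: "nat \<Rightarrow> grass" where "psi i = gen (2 * i + 1)"

definition pairing :: "nat \<Rightarrow> grass" where
  "pairing n = (\<lambda>S. \<Sum>i\<in>{1..n}. gmult (psibar i) (psi i) S)"

definition Jpairing :: "nat \<Rightarrow> grass" where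
  "Jpairing n = (\<lambda>S. \<Sum>i\<in>{1..n}. \<Sum>j\<in>{1..n}. gmult (psibar i) (psi j) S)"

text \<open>Berezin integral: coefficient of prod_{i=1}^n (psibar_i psi_i), which (in our ordering
  psibar_i < psi_i < psibar_(i+1)) is the ordered monomial on {2..2n+1} with sign +1.\<close>
definition berezin :: "nat \<Rightarrow> grass \<Rightarrow> complex" where
  "berezin n x = x {2..2 * n + 1}"

end

theory Submission
  imports Defs
begin

(* Write P = (psibar, psi) = sum_i psibar_i psi_i and Q = (psibar, J psi) =
   (sum_i psibar_i) (sum_j psi_j).  Since both factors of Q are odd, Q^2 = 0; as g(P) is even
   (hence central), Y = Q g(P) also satisfies Y^2 = 0, and since h(P) is even,
   exp(h(P) + Y) = exp(h(P)) (1 + Y) by the binomial formula for a square-zero perturbation.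
   Both sides of the theorem therefore differ only by a term F Q versus F P with
   F = P^r exp(h(P)) g(P).  Every monomial occurring in F is "pair-closed" (contains psibar_i
   iff it contains psi_i), so the coefficient of the top monomial in F Q only sees the diagonal
   terms psibar_i psi_i of Q, which are exactly the terms of P. *)


section \<open>Sign combinatorics of reordering monomials\<close>

definition inversions :: "nat set \<Rightarrow> nat set \<Rightarrow> nat" where
  "inversions A B = card {(a, b). a \<in> A \<and> b \<in> B \<and> b < a}"

lemma reorder_sign_inversions: "reorder_sign A B = (-1) ^ inversions A B"
  by (simp add: reorder_sign_def inversions_def)

lemma inversions_empty [simp]: "inversions A {} = 0" "inversions {} A = 0"
  by (simp_all add: inversions_def)

lemma finite_inversion_pairs:
  "finite A \<Longrightarrow> finite B \<Longrightarrow> finite {(a, b). a \<in> A \<and> b \<in> B \<and> b < a}"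
  by (rule finite_subset[of _ "A \<times> B"]) auto

lemma inversions_Un_left:
  assumes "finite A" "finite C" "finite D" "A \<inter> C = {}"
  shows "inversions (A \<union> C) D = inversions A D + inversions C D"
proof -
  have "{(a, b). a \<in> A \<union> C \<and> b \<in> D \<and> b < a} =
        {(a, b). a \<in> A \<and> b \<in> D \<and> b < a} \<union> {(a, b). a \<in> C \<and> b \<in> D \<and> b < a}" by auto
  moreover have "card (\<dots>) = inversions A D + inversions C D"
    unfolding inversions_def
    by (rule card_Un_disjoint) (use assms in \<open>auto intro: finite_inversion_pairs\<close>)
  ultimately show ?thesis by (simp add: inversions_def)
qed

lemma inversions_Un_right:
  assumes "finite A" "finite C" "finite D" "C \<inter> D = {}"
  shows "inversions A (C \<union> D) = inversions A C + inversions A D"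
proof -
  have "{(a, b). a \<in> A \<and> b \<in> C \<union> D \<and> b < a} =
        {(a, b). a \<in> A \<and> b \<in> C \<and> b < a} \<union> {(a, b). a \<in> A \<and> b \<in> D \<and> b < a}" by auto
  moreover have "card (\<dots>) = inversions A C + inversions A D"
    unfolding inversions_def
    by (rule card_Un_disjoint) (use assms in \<open>auto intro: finite_inversion_pairs\<close>)
  ultimately show ?thesis by (simp add: inversions_def)
qed

text \<open>Every pair of a disjoint A and B is an inversion of exactly one of (A, B) and (B, A).\<close>
lemma inversions_swap:
  assumes "finite A" "finite B" "A \<inter> B = {}"
  shows "inversions A B + inversions B A = card A * card B"
proof -
  let ?up = "{(a, b). a \<in> A \<and> b \<in> B \<and> a < b}"
  have swap: "{(b, a). b \<in> B \<and> a \<in> A \<and> a < b} = prod.swap ` ?up"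
    by (auto simp: image_iff)
  have "inversions B A = card ?up"
    unfolding inversions_def swap by (rule card_image) (simp add: inj_on_def)
  moreover have "A \<times> B = {(a, b). a \<in> A \<and> b \<in> B \<and> b < a} \<union> ?up"
    using assms(3) by auto
  moreover have "card ({(a, b). a \<in> A \<and> b \<in> B \<and> b < a} \<union> ?up) = inversions A B + card ?up"
    unfolding inversions_def
    by (rule card_Un_disjoint) (use assms in \<open>auto intro: finite_subset[of _ "A \<times> B"]\<close>)
  ultimately show ?thesis by (metis card_cartesian_product)
qed

lemma reorder_sign_swap:
  assumes "finite A" "finite B" "A \<inter> B = {}"
  shows "reorder_sign B A = reorder_sign A B * (-1) ^ (card A * card B)"
proof -
  have "(-1::complex) ^ (card A * card B) = (-1) ^ inversions A B * (-1) ^ inversions B A"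
    using inversions_swap[OF assms] by (metis power_add)
  moreover have "(-1::complex) ^ inversions A B * (-1) ^ inversions A B = 1"
    by (simp flip: power_mult_distrib)
  ultimately show ?thesis
    unfolding reorder_sign_inversions by (metis mult.assoc mult_1 mult.commute)
qed

text \<open>The two ways of splitting S into A, B - A, S - B give the same total sign; this is the
  combinatorial content of associativity.\<close>
lemma reorder_sign_assoc:
  assumes "A \<subseteq> B" "B \<subseteq> S" "finite S"
  shows "reorder_sign A (S - A) * reorder_sign (B - A) (S - B) =
         reorder_sign B (S - B) * reorder_sign A (B - A)"
proof -
  have fin: "finite A" "finite B" "finite (B - A)" "finite (S - B)"
    using assms by (meson Diff_subset finite_subset subset_trans)+
  have "S - A = (B - A) \<union> (S - B)" using assms by blast
  then have "inversions A (S - A) = inversions A ((B - A) \<union> (S - B))" by simp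
  also have "\<dots> = inversions A (B - A) + inversions A (S - B)"
    by (rule inversions_Un_right) (use fin in auto)
  finally have left: "inversions A (S - A) = inversions A (B - A) + inversions A (S - B)" .
  have "inversions B (S - B) = inversions (A \<union> (B - A)) (S - B)"
    using assms by (simp add: Un_absorb1)
  also have "\<dots> = inversions A (S - B) + inversions (B - A) (S - B)"
    by (rule inversions_Un_left) (use fin in auto)
  finally have right: "inversions B (S - B) = inversions A (S - B) + inversions (B - A) (S - B)" .
  show ?thesis unfolding reorder_sign_inversions left right power_add by (simp add: mult_ac)
qed


lemma gmult_infinite: "infinite S \<Longrightarrow> gmult x y S = 0"
  by (simp add: gmult_def)

lemma gmult_assoc: "gmult (gmult x y) z = gmult x (gmult y z)"
proof (rule ext)
  fix S
  show "gmult (gmult x y) z S = gmult x (gmult y z) S"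
  proof (cases "finite S")
    case False then show ?thesis by (simp add: gmult_infinite)
  next
    case True
    have L: "gmult (gmult x y) z S = (\<Sum>(B, A)\<in>Sigma (Pow S) Pow.
        reorder_sign B (S - B) * reorder_sign A (B - A) * x A * y (B - A) * z (S - B))"
      unfolding gmult_def
      by (subst sum.Sigma[symmetric])
         (use True finite_subset in \<open>auto simp: sum_distrib_left sum_distrib_right mult_ac
            intro!: sum.cong\<close>)
    have R: "gmult x (gmult y z) S = (\<Sum>(A, C)\<in>Sigma (Pow S) (\<lambda>A. Pow (S - A)).
        reorder_sign A (S - A) * reorder_sign C (S - A - C) * x A * y C * z (S - A - C))"
      unfolding gmult_def
      by (subst sum.Sigma[symmetric])
         (use True finite_subset in \<open>auto simp: sum_distrib_left sum_distrib_right mult_ac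
            intro!: sum.cong\<close>)
    show ?thesis unfolding L R
    proof (rule sum.reindex_bij_witness[of _ "\<lambda>(A, C). (A \<union> C, A)" "\<lambda>(B, A). (A, B - A)"])
      fix a assume "a \<in> Sigma (Pow S) Pow"
      then obtain B A where [simp]: "a = (B, A)" and sub: "A \<subseteq> B" "B \<subseteq> S" by auto
      show "(case case a of (B, A) \<Rightarrow> (A, B - A) of (A, C) \<Rightarrow> (A \<union> C, A)) = a"
        "(case a of (B, A) \<Rightarrow> (A, B - A)) \<in> Sigma (Pow S) (\<lambda>A. Pow (S - A))"
        using sub by auto
      have "S - A - (B - A) = S - B" using sub by auto
      then show "(case case a of (B, A) \<Rightarrow> (A, B - A) of (A, C) \<Rightarrow>
            reorder_sign A (S - A) * reorder_sign C (S - A - C) * x A * y C * z (S - A - C)) =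
         (case a of (B, A) \<Rightarrow>
            reorder_sign B (S - B) * reorder_sign A (B - A) * x A * y (B - A) * z (S - B))"
        using reorder_sign_assoc[OF sub True] by simp
    next
      fix b assume "b \<in> Sigma (Pow S) (\<lambda>A. Pow (S - A))"
      then obtain A C where [simp]: "b = (A, C)" and sub: "A \<subseteq> S" "C \<subseteq> S - A" by auto
      show "(case case b of (A, C) \<Rightarrow> (A \<union> C, A) of (B, A) \<Rightarrow> (A, B - A)) = b"
        "(case b of (A, C) \<Rightarrow> (A \<union> C, A)) \<in> Sigma (Pow S) Pow"
        using sub by auto
    qed
  qed
qed

lemma gmult_gone_left:
  assumes "\<forall>S. infinite S \<longrightarrow> x S = 0"
  shows "gmult gone x = x"
proof (rule ext)
  fix S show "gmult gone x S = x S"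
  proof (cases "finite S")
    case True
    have "gmult gone x S = (\<Sum>A\<in>Pow S. if A = {} then x S else 0)"
      unfolding gmult_def by (rule sum.cong) (auto simp: gone_def reorder_sign_inversions)
    with True show ?thesis by simp
  qed (use assms gmult_infinite in auto)
qed

lemma gmult_gone_right:
  assumes "\<forall>S. infinite S \<longrightarrow> x S = 0"
  shows "gmult x gone = x"
proof (rule ext)
  fix S show "gmult x gone S = x S"
  proof (cases "finite S")
    case True
    have "gmult x gone S = (\<Sum>A\<in>Pow S. if A = S then x S else 0)"
      unfolding gmult_def by (rule sum.cong) (auto simp: gone_def reorder_sign_inversions)
    with True show ?thesis by simp
  qed (use assms gmult_infinite in auto)
qed


section \<open>The Grassmann algebra as a ring\<close>

text \<open>Coefficient functions vanishing on infinite index sets (the only ones that can describe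
  elements of the algebra) form a ring under gadd and gmult.\<close>
typedef galg = "{x::grass. \<forall>S. infinite S \<longrightarrow> x S = 0}" morphisms gcoeff Abs_galg
  by (rule exI[of _ gzero]) (simp add: gzero_def)

setup_lifting type_definition_galg

instantiation galg :: ring_1
begin
lift_definition zero_galg :: galg is gzero by (simp add: gzero_def)
lift_definition one_galg :: galg is gone by (auto simp: gone_def)
lift_definition plus_galg :: "galg \<Rightarrow> galg \<Rightarrow> galg" is gadd by (simp add: gadd_def)
lift_definition uminus_galg :: "galg \<Rightarrow> galg" is "gscale (-1)" by (simp add: gscale_def)
lift_definition minus_galg :: "galg \<Rightarrow> galg \<Rightarrow> galg" is "\<lambda>x y. gadd x (gscale (-1) y)"
  by (simp add: gadd_def gscale_def)
lift_definition times_galg :: "galg \<Rightarrow> galg \<Rightarrow> galg" is gmult by (simp add: gmult_infinite)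
instance
proof
  fix a b c :: galg
  show "a + b + c = a + (b + c)" by transfer (simp add: gadd_def add.assoc)
  show "a + b = b + a" by transfer (simp add: gadd_def add.commute)
  show "0 + a = a" by transfer (simp add: gadd_def gzero_def)
  show "- a + a = 0" by transfer (simp add: gadd_def gzero_def gscale_def)
  show "a - b = a + - b" by transfer simp
  show "a * b * c = a * (b * c)" by transfer (rule gmult_assoc)
  show "(a + b) * c = a * c + b * c"
    by transfer (auto simp: gmult_def gadd_def algebra_simps sum.distrib)
  show "a * (b + c) = a * b + a * c"
    by transfer (auto simp: gmult_def gadd_def algebra_simps sum.distrib)
  show "1 * a = a" by transfer (rule gmult_gone_left)
  show "a * 1 = a" by transfer (rule gmult_gone_right)
  show "(0::galg) \<noteq> 1" by transfer (simp add: gzero_def gone_def fun_eq_iff)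
qed
end

lemma gcoeff_infinite: "infinite S \<Longrightarrow> gcoeff x S = 0"
  using gcoeff by auto

lemma galg_eqI: "(\<And>S. finite S \<Longrightarrow> gcoeff x S = gcoeff y S) \<Longrightarrow> x = y"
  by (metis gcoeff_inject gcoeff_infinite ext)

lemma gcoeff_add: "gcoeff (x + y) S = gcoeff x S + gcoeff y S"
  by (simp add: plus_galg.rep_eq gadd_def)

lemma gcoeff_minus: "gcoeff (- x) S = - gcoeff x S"
  by (simp add: uminus_galg.rep_eq gscale_def)

lemma gcoeff_sum: "gcoeff (sum f K) S = (\<Sum>k\<in>K. gcoeff (f k) S)"
  by (induction K rule: infinite_finite_induct)
     (auto simp: zero_galg.rep_eq gzero_def gcoeff_add)

lemma gcoeff_of_nat_mult: "gcoeff (of_nat k * x) S = of_nat k * gcoeff x S"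
  by (induction k) (auto simp: gcoeff_add zero_galg.rep_eq gzero_def algebra_simps)

lemma gcoeff_power: "gcoeff (x ^ k) = gpow (gcoeff x) k"
  by (induction k) (auto simp: one_galg.rep_eq times_galg.rep_eq)

lemma gcoeff_mult:
  "gcoeff (x * y) S = (\<Sum>A\<in>Pow S. reorder_sign A (S - A) * gcoeff x A * gcoeff y (S - A))"
  by (simp add: times_galg.rep_eq gmult_def)


definition supp :: "(nat set \<Rightarrow> bool) \<Rightarrow> grass \<Rightarrow> bool" where
  "supp P x \<longleftrightarrow> (\<forall>A. x A \<noteq> 0 \<longrightarrow> P A)"

text \<open>Properties of monomials that are inherited by products of monomials; the elements
  supported on such a property form a subalgebra.\<close>
definition union_closed :: "(nat set \<Rightarrow> bool) \<Rightarrow> bool" where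
  "union_closed P \<longleftrightarrow> P {} \<and>
     (\<forall>A B. finite A \<longrightarrow> finite B \<longrightarrow> A \<inter> B = {} \<longrightarrow> P A \<longrightarrow> P B \<longrightarrow> P (A \<union> B))"

lemma supp_gmult:
  assumes closed: "union_closed P" and "supp P x" "supp P y"
  shows "supp P (gmult x y)"
  unfolding supp_def
proof (intro allI impI)
  fix S assume nz: "gmult x y S \<noteq> 0"
  then have fin: "finite S" using gmult_infinite by blast
  from nz obtain A where A: "A \<in> Pow S" "reorder_sign A (S - A) * x A * y (S - A) \<noteq> 0"
    unfolding gmult_def by (meson sum.not_neutral_contains_not_neutral)
  then have "P A" "P (S - A)" using assms by (auto simp: supp_def)
  moreover have "finite A" "finite (S - A)" using A fin finite_subset by auto
  ultimately have "P (A \<union> (S - A))" using closed unfolding union_closed_def by blast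
  moreover have "A \<union> (S - A) = S" using A by auto
  ultimately show "P S" by simp
qed

lemma supp_gpow:
  assumes "union_closed P" "supp P x"
  shows "supp P (gpow x k)"
proof (induction k)
  case 0
  show ?case using assms(1) by (simp add: supp_def gone_def union_closed_def)
next
  case (Suc k)
  then show ?case by (simp add: supp_gmult assms)
qed

lemma supp_gnil: "supp P x \<Longrightarrow> supp P (gnil x)"
  by (auto simp: supp_def gnil_def)

lemma supp_coefficient_sum:
  assumes "\<And>S. \<forall>k\<in>K S. f k S \<noteq> 0 \<longrightarrow> P S"
  shows "supp P (\<lambda>S. \<Sum>k\<in>K S. f k S)"
  unfolding supp_def using assms by (metis sum.neutral)

lemma supp_fps_app:
  assumes "union_closed P" "supp P x"
  shows "supp P (fps_app f x)"
  unfolding fps_app_def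
  by (rule supp_coefficient_sum) (use supp_gpow[OF assms] in \<open>auto simp: supp_def\<close>)

lemma supp_gexp:
  assumes "union_closed P" "supp P x"
  shows "supp P (gexp x)"
proof -
  have "supp P (\<lambda>S. \<Sum>k\<le>card S. gpow (gnil x) k S / of_nat (fact k))"
    by (rule supp_coefficient_sum)
       (use supp_gpow[OF assms(1) supp_gnil[OF assms(2)]] in \<open>auto simp: supp_def\<close>)
  then show ?thesis unfolding gexp_def supp_def by auto
qed

lemma supp_gcoeff_mult:
  "union_closed P \<Longrightarrow> supp P (gcoeff x) \<Longrightarrow> supp P (gcoeff y) \<Longrightarrow> supp P (gcoeff (x * y))"
  by (simp add: times_galg.rep_eq supp_gmult)

lemma supp_gcoeff_sum:
  "(\<And>k. k \<in> K \<Longrightarrow> supp P (gcoeff (f k))) \<Longrightarrow> supp P (gcoeff (sum f K))"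
  unfolding gcoeff_sum supp_def by (meson sum.not_neutral_contains_not_neutral)


section \<open>Parity: even elements are central, odd elements anticommute\<close>

abbreviation even_card :: "nat set \<Rightarrow> bool" where "even_card A \<equiv> even (card A)"
abbreviation odd_card :: "nat set \<Rightarrow> bool" where "odd_card A \<equiv> odd (card A)"

lemma union_closed_even_card: "union_closed even_card"
  by (auto simp: union_closed_def card_Un_disjoint)

lemma gmult_commute_sign:
  assumes "finite S"
  shows "gmult y x S =
    (\<Sum>A\<in>Pow S. reorder_sign A (S - A) * (-1) ^ (card A * card (S - A)) * x A * y (S - A))"
  unfolding gmult_def
proof (rule sum.reindex_bij_witness[of _ "\<lambda>A. S - A" "\<lambda>A. S - A"])
  fix A assume "A \<in> Pow S"
  then have A: "A \<subseteq> S" by auto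
  then show "S - (S - A) = A" "S - A \<in> Pow S" by auto
  have "finite A" "finite (S - A)" using A assms finite_subset by auto
  from reorder_sign_swap[OF this(2,1)]
  have "reorder_sign A (S - A) = reorder_sign (S - A) A * (-1) ^ (card (S - A) * card A)"
    by auto
  then show "reorder_sign (S - A) (S - (S - A)) * (-1) ^ (card (S - A) * card (S - (S - A))) *
      x (S - A) * y (S - (S - A)) = reorder_sign A (S - A) * y A * x (S - A)"
    using A by (simp add: Diff_Diff_Int Int_absorb1 mult_ac)
qed auto

lemma even_commute:
  assumes "supp even_card (gcoeff x)"
  shows "x * y = y * x"
proof (rule galg_eqI)
  fix S :: "nat set" assume "finite S"
  show "gcoeff (x * y) S = gcoeff (y * x) S"
    unfolding times_galg.rep_eq gmult_commute_sign[OF \<open>finite S\<close>, of "gcoeff y" "gcoeff x"]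
    unfolding gmult_def
    by (rule sum.cong) (use assms in \<open>auto simp: supp_def\<close>)
qed

lemma odd_anticommute:
  assumes "supp odd_card (gcoeff x)" "supp odd_card (gcoeff y)"
  shows "y * x = - (x * y)"
proof (rule galg_eqI)
  fix S :: "nat set" assume "finite S"
  show "gcoeff (y * x) S = gcoeff (- (x * y)) S"
    unfolding gcoeff_minus times_galg.rep_eq gmult_commute_sign[OF \<open>finite S\<close>, of "gcoeff y" "gcoeff x"]
    unfolding gmult_def sum_negf[symmetric]
  proof (rule sum.cong)
    fix A assume "A \<in> Pow S"
    show "reorder_sign A (S - A) * (-1) ^ (card A * card (S - A)) * gcoeff x A * gcoeff y (S - A) =
      - (reorder_sign A (S - A) * gcoeff x A * gcoeff y (S - A))"
    proof (cases "gcoeff x A = 0 \<or> gcoeff y (S - A) = 0")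
      case False
      then have "odd (card A * card (S - A))" using assms by (auto simp: supp_def)
      then show ?thesis by simp
    qed auto
  qed simp
qed

lemma odd_square_zero:
  assumes "supp odd_card (gcoeff x)"
  shows "x * x = 0"
proof (rule galg_eqI)
  fix S :: "nat set"
  have "gcoeff (x * x) S = - gcoeff (x * x) S"
    using odd_anticommute[OF assms assms] by (metis gcoeff_minus)
  then show "gcoeff (x * x) S = gcoeff 0 S" by (simp add: zero_galg.rep_eq gzero_def)
qed

lemma odd_product_square_zero:
  assumes "supp odd_card (gcoeff a)" "supp odd_card (gcoeff b)"
  shows "(a * b) * (a * b) = 0"
proof -
  have "(a * b) * (a * b) = a * (b * a) * b" by (simp add: mult.assoc)
  also have "\<dots> = - ((a * a) * (b * b))"
    using odd_anticommute[OF assms] by (simp add: mult.assoc)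
  finally show ?thesis using odd_square_zero[OF assms(1)] by simp
qed


section \<open>The exponential and square-zero perturbations\<close>

lift_definition Gexp :: "galg \<Rightarrow> galg" is gexp by (auto simp: gexp_def gone_def)

lift_definition Nilpart :: "galg \<Rightarrow> galg" is gnil by (auto simp: gnil_def)

lemma Nilpart_empty: "gcoeff (Nilpart x) {} = 0"
  by (simp add: Nilpart.rep_eq gnil_def)

lemma Nilpart_add:
  assumes "gcoeff y {} = 0"
  shows "Nilpart (x + y) = Nilpart x + y"
  by (rule galg_eqI) (use assms in \<open>auto simp: Nilpart.rep_eq gnil_def gcoeff_add\<close>)

lemma gcoeff_mult_card_less:
  assumes x: "\<And>A. card A < a \<Longrightarrow> gcoeff x A = 0" and y: "\<And>B. card B < b \<Longrightarrow> gcoeff y B = 0"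
    and S: "card S < a + b"
  shows "gcoeff (x * y) S = 0"
proof (cases "finite S")
  case True
  have "reorder_sign A (S - A) * gcoeff x A * gcoeff y (S - A) = 0" if "A \<in> Pow S" for A
  proof -
    from that have "finite A" "finite (S - A)" "A \<union> (S - A) = S"
      using True finite_subset by auto
    then have "card A + card (S - A) = card S" by (metis card_Un_disjoint Diff_disjoint)
    then have "card A < a \<or> card (S - A) < b" using S by linarith
    then show ?thesis using x y by auto
  qed
  then show ?thesis unfolding gcoeff_mult by (intro sum.neutral) blast
qed (simp add: gcoeff_infinite)

lemma gcoeff_power_card_less:
  assumes "gcoeff x {} = 0" "card S < k"
  shows "gcoeff (x ^ k) S = 0"
  using assms(2)
proof (induction k arbitrary: S)
  case (Suc k)
  have "\<And>A. card A < 1 \<Longrightarrow> gcoeff x A = 0"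
    using assms(1) by (metis card_eq_0_iff gcoeff_infinite less_one)
  then show ?case using Suc gcoeff_mult_card_less[of 1 x k "x ^ k" S] by simp
qed simp

lemma gcoeff_Gexp:
  assumes "card S \<le> M"
  shows "gcoeff (Gexp x) S =
    exp (gcoeff x {}) * (\<Sum>k\<le>M. gcoeff (Nilpart x ^ k) S / of_nat (fact k))"
proof -
  have "gcoeff (Gexp x) S =
      exp (gcoeff x {}) * (\<Sum>k\<le>card S. gcoeff (Nilpart x ^ k) S / of_nat (fact k))"
    by (simp add: Gexp.rep_eq gexp_def Nilpart.rep_eq gcoeff_power)
  also have "(\<Sum>k\<le>card S. gcoeff (Nilpart x ^ k) S / of_nat (fact k)) =
      (\<Sum>k\<le>M. gcoeff (Nilpart x ^ k) S / of_nat (fact k))"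
    by (rule sum.mono_neutral_left)
       (use assms gcoeff_power_card_less[OF Nilpart_empty] in auto)
  finally show ?thesis .
qed

lemma gcoeff_Gexp_mult:
  assumes "finite S" "card S \<le> M"
  shows "gcoeff (Gexp x * y) S =
    exp (gcoeff x {}) * (\<Sum>k\<le>M. gcoeff (Nilpart x ^ k * y) S / of_nat (fact k))"
proof -
  define c where "c = exp (gcoeff x {})"
  have "gcoeff (Gexp x * y) S = (\<Sum>A\<in>Pow S. reorder_sign A (S - A) *
      (c * (\<Sum>k\<le>M. gcoeff (Nilpart x ^ k) A / of_nat (fact k))) * gcoeff y (S - A))"
    unfolding gcoeff_mult
  proof (rule sum.cong)
    fix A assume "A \<in> Pow S"
    then have "card A \<le> M" using assms by (meson PowD card_mono order.trans)
    then show "reorder_sign A (S - A) * gcoeff (Gexp x) A * gcoeff y (S - A) =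
      reorder_sign A (S - A) * (c * (\<Sum>k\<le>M. gcoeff (Nilpart x ^ k) A / of_nat (fact k))) *
        gcoeff y (S - A)"
      by (simp add: gcoeff_Gexp c_def)
  qed simp
  also have "\<dots> = c * (\<Sum>k\<le>M. (\<Sum>A\<in>Pow S.
      reorder_sign A (S - A) * gcoeff (Nilpart x ^ k) A * gcoeff y (S - A)) / of_nat (fact k))"
    by (simp add: sum_distrib_left sum_distrib_right sum_divide_distrib mult_ac) (rule sum.swap)
  finally show ?thesis unfolding c_def gcoeff_mult .
qed

lemma power_add_square_zero:
  fixes n y :: "'a::ring_1"
  assumes comm: "n * y = y * n" and sq: "y * y = 0"
  shows "(n + y) ^ Suc i = n ^ Suc i + of_nat (Suc i) * (n ^ i * y)"
proof (induction i)
  case (Suc i)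
  have yn: "y * n ^ k = n ^ k * y" for k using power_commuting_commutes comm by metis
  have "(n + y) ^ Suc (Suc i) = (n + y) * (n ^ Suc i + of_nat (Suc i) * (n ^ i * y))"
    using Suc by simp
  also have "\<dots> = n ^ Suc (Suc i) + of_nat (Suc i) * (n ^ Suc i * y) + y * n ^ Suc i
       + of_nat (Suc i) * (y * n ^ i * y)"
    by (simp add: algebra_simps mult_of_nat_commute)
  also have "y * n ^ i * y = 0" by (simp add: yn mult.assoc sq)
  also have "y * n ^ Suc i = n ^ Suc i * y" by (rule yn)
  finally show ?case by (simp add: algebra_simps)
qed simp

lemma Gexp_add_square_zero:
  assumes even: "supp even_card (gcoeff x)" and y0: "gcoeff y {} = 0" and sq: "y * y = 0"
  shows "Gexp (x + y) = Gexp x * (1 + y)"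
proof (rule galg_eqI)
  fix S :: "nat set" assume fin: "finite S"
  define N where "N = Nilpart x"
  define m where "m = card S"
  define c where "c = exp (gcoeff x {})"
  have N: "Nilpart (x + y) = N + y" unfolding N_def using y0 by (rule Nilpart_add)
  have "N * y = y * N"
    unfolding N_def by (rule even_commute) (simp add: Nilpart.rep_eq supp_gnil[OF even])
  then have binom: "gcoeff ((N + y) ^ Suc i) S / of_nat (fact (Suc i)) =
      gcoeff (N ^ Suc i) S / of_nat (fact (Suc i)) + gcoeff (N ^ i * y) S / of_nat (fact i)" for i
    by (simp only: power_add_square_zero[OF _ sq] gcoeff_add gcoeff_of_nat_mult
        add_divide_distrib fact_Suc of_nat_mult) (simp del: of_nat_Suc)
  have "gcoeff (Gexp (x + y)) S = c * (\<Sum>k\<le>Suc m. gcoeff ((N + y) ^ k) S / of_nat (fact k))"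
    using gcoeff_Gexp[of S "Suc m" "x + y"] y0 by (simp add: N m_def c_def gcoeff_add)
  also have "\<dots> = c * (gcoeff 1 S + (\<Sum>i\<le>m. gcoeff (N ^ Suc i) S / of_nat (fact (Suc i))))
      + c * (\<Sum>i\<le>m. gcoeff (N ^ i * y) S / of_nat (fact i))"
    by (simp only: sum.atMost_Suc_shift binom sum.distrib) (simp add: algebra_simps)
  also have "\<dots> = c * (\<Sum>k\<le>Suc m. gcoeff (N ^ k) S / of_nat (fact k))
      + c * (\<Sum>i\<le>m. gcoeff (N ^ i * y) S / of_nat (fact i))"
    by (simp only: sum.atMost_Suc_shift) simp
  also have "\<dots> = gcoeff (Gexp x) S + gcoeff (Gexp x * y) S"
    using gcoeff_Gexp[of S "Suc m" x] gcoeff_Gexp_mult[OF fin, of m x y]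
    by (simp add: N_def m_def c_def)
  finally show "gcoeff (Gexp (x + y)) S = gcoeff (Gexp x * (1 + y)) S"
    by (simp add: distrib_left gcoeff_add)
qed


section \<open>Generators and the two quadratic forms\<close>

lift_definition Gen :: "nat \<Rightarrow> galg" is gen by (auto simp: gen_def)

lift_definition Fps_app :: "complex fps \<Rightarrow> galg \<Rightarrow> galg" is fps_app
  by (auto simp: fps_app_def gone_def)

definition Pairing :: "nat \<Rightarrow> galg" where
  "Pairing n = (\<Sum>i\<in>{1..n}. Gen (2 * i) * Gen (2 * i + 1))"

definition JPairing :: "nat \<Rightarrow> galg" where
  "JPairing n = (\<Sum>i\<in>{1..n}. Gen (2 * i)) * (\<Sum>j\<in>{1..n}. Gen (2 * j + 1))"

lemma gcoeff_Pairing: "gcoeff (Pairing n) = pairing n"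
  by (rule ext) (simp add: Pairing_def pairing_def gcoeff_sum times_galg.rep_eq Gen.rep_eq
      psibar_def psi_def)

lemma gcoeff_JPairing: "gcoeff (JPairing n) = Jpairing n"
  by (rule ext) (simp only: JPairing_def Jpairing_def sum_product gcoeff_sum times_galg.rep_eq
      Gen.rep_eq psibar_def psi_def)

lemma gmult_gen:
  "gmult (gen a) (gen b) B = (if a \<noteq> b \<and> B = {a, b} then (if b < a then -1 else 1) else 0)"
proof (cases "finite B")
  case False then show ?thesis by (auto simp: gmult_infinite)
next
  case True
  have "gmult (gen a) (gen b) B =
      (\<Sum>A\<in>Pow B. if A = {a} then (if B - {a} = {b} then reorder_sign {a} {b} else 0) else 0)"
    unfolding gmult_def by (rule sum.cong) (auto simp: gen_def)
  also have "\<dots> = (if a \<in> B \<and> B - {a} = {b} then reorder_sign {a} {b} else 0)"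
    using True by simp
  also have "reorder_sign {a} {b} = (if b < a then -1 else 1)"
  proof -
    have "{(x, y). x \<in> {a} \<and> y \<in> {b} \<and> y < x} = (if b < a then {(a, b)} else {})" by auto
    then show ?thesis by (simp add: reorder_sign_def)
  qed
  also have "(a \<in> B \<and> B - {a} = {b}) = (a \<noteq> b \<and> B = {a, b})" by auto
  finally show ?thesis .
qed

text \<open>(psibar, J psi) is a product of two odd elements, hence squares to zero.\<close>
lemma JPairing_square_zero: "JPairing n * JPairing n = 0"
  unfolding JPairing_def
  by (rule odd_product_square_zero; rule supp_gcoeff_sum)
     (auto simp: Gen.rep_eq supp_def gen_def)

definition pair_closed :: "nat set \<Rightarrow> bool" where
  "pair_closed A \<longleftrightarrow> (\<forall>i. 2 * i \<in> A \<longleftrightarrow> Suc (2 * i) \<in> A)"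

lemma union_closed_pair_closed: "union_closed pair_closed"
  by (auto simp: union_closed_def pair_closed_def)

lemma pairing_monomials: "pairing n B \<noteq> 0 \<Longrightarrow> \<exists>i. B = {2 * i, Suc (2 * i)}"
proof -
  assume "pairing n B \<noteq> 0"
  then obtain i where "gmult (psibar i) (psi i) B \<noteq> 0"
    unfolding pairing_def by (meson sum.not_neutral_contains_not_neutral)
  then show ?thesis by (auto simp: psibar_def psi_def gmult_gen split: if_splits)
qed

lemma supp_pairing: "supp even_card (pairing n)" "supp pair_closed (pairing n)"
proof -
  have "even_card {2 * i, Suc (2 * i)}" "pair_closed {2 * i, Suc (2 * i)}" for i :: nat
    by (auto simp: pair_closed_def)
  then show "supp even_card (pairing n)" "supp pair_closed (pairing n)"
    unfolding supp_def using pairing_monomials by metis+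
qed

lemma Jpairing_pair_closed:
  assumes "pair_closed B"
  shows "Jpairing n B = pairing n B"
proof -
  have off_diagonal: "gmult (psibar i) (psi j) B = 0" if "j \<noteq> i" for i j
  proof -
    have "B \<noteq> {2 * i, Suc (2 * j)}"
    proof
      assume B: "B = {2 * i, Suc (2 * j)}"
      then have "Suc (2 * i) \<in> B" using assms unfolding pair_closed_def by auto
      with B \<open>j \<noteq> i\<close> show False by auto
    qed
    then show ?thesis by (simp add: psibar_def psi_def gmult_gen)
  qed
  have "(\<Sum>j\<in>{1..n}. gmult (psibar i) (psi j) B) = gmult (psibar i) (psi i) B"
    if "i \<in> {1..n}" for i
    using that by (subst sum.remove[of _ i]) (auto intro: sum.neutral simp: off_diagonal)
  then show ?thesis unfolding Jpairing_def pairing_def by (rule sum.cong[OF refl])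
qed

lemma gcoeff_mult_JPairing:
  assumes F: "supp pair_closed (gcoeff F)" and T: "pair_closed T"
  shows "gcoeff (F * JPairing n) T = gcoeff (F * Pairing n) T"
  unfolding gcoeff_mult
proof (rule sum.cong)
  fix A assume "A \<in> Pow T"
  show "reorder_sign A (T - A) * gcoeff F A * gcoeff (JPairing n) (T - A) =
        reorder_sign A (T - A) * gcoeff F A * gcoeff (Pairing n) (T - A)"
  proof (cases "gcoeff F A = 0")
    case False
    then have "pair_closed (T - A)" using F T by (auto simp: supp_def pair_closed_def)
    then show ?thesis by (simp add: gcoeff_JPairing gcoeff_Pairing Jpairing_pair_closed)
  qed simp
qed simp

lemma supp_Fps_app_Pairing:
  "supp even_card (gcoeff (Fps_app f (Pairing n)))"
  "supp pair_closed (gcoeff (Fps_app f (Pairing n)))"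
  unfolding Fps_app.rep_eq gcoeff_Pairing
  by (intro supp_fps_app union_closed_even_card union_closed_pair_closed supp_pairing)+

text \<open>For even y, the element (psibar, J psi) y squares to zero, so it only contributes to
  first order in the exponential.\<close>
lemma Gexp_add_JPairing:
  assumes x: "supp even_card (gcoeff x)" and y: "supp even_card (gcoeff y)"
  shows "Gexp (x + JPairing n * y) = Gexp x * (1 + JPairing n * y)"
proof (rule Gexp_add_square_zero[OF x])
  let ?Q = "JPairing n"
  show "gcoeff (?Q * y) {} = 0"
    by (simp add: gcoeff_mult gcoeff_JPairing Jpairing_def psibar_def psi_def gmult_gen)
  have "?Q * y * (?Q * y) = ?Q * (y * ?Q) * y" by (simp add: mult.assoc)
  also have "\<dots> = (?Q * ?Q) * (y * y)" by (simp add: even_commute[OF y, of ?Q] mult.assoc)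
  finally show "?Q * y * (?Q * y) = 0" by (simp add: JPairing_square_zero)
qed


theorem lemma3:
  fixes n r :: nat and g h :: "complex fps"
  assumes "n \<ge> 1"
  shows "berezin n (gmult (gpow (pairing n) r)
            (gexp (gadd (fps_app h (pairing n)) (gmult (Jpairing n) (fps_app g (pairing n))))))
       = berezin n (gmult (gpow (pairing n) r)
            (gmult (gexp (fps_app h (pairing n)))
                   (gadd gone (gmult (pairing n) (fps_app g (pairing n))))))"
proof -
  define P Q where "P = Pairing n" and "Q = JPairing n"
  define H G where "H = Fps_app h P" and "G = Fps_app g P"
  define F where "F = P ^ r * Gexp H * G"
  have even: "supp even_card (gcoeff H)" "supp even_card (gcoeff G)"
    unfolding H_def G_def P_def by (rule supp_Fps_app_Pairing)+
  have "supp pair_closed (gcoeff F)"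
    unfolding F_def H_def G_def P_def
    by (intro supp_gcoeff_mult union_closed_pair_closed supp_Fps_app_Pairing)
       (simp_all add: gcoeff_power Gexp.rep_eq Fps_app.rep_eq gcoeff_Pairing supp_pairing
         union_closed_pair_closed supp_gpow supp_gexp supp_fps_app)
  then have top: "gcoeff (F * Q) {2..2 * n + 1} = gcoeff (F * P) {2..2 * n + 1}"
    unfolding P_def Q_def by (rule gcoeff_mult_JPairing) (auto simp: pair_closed_def)
  have "Gexp (H + Q * G) = Gexp H * (1 + Q * G)"
    unfolding Q_def by (rule Gexp_add_JPairing[OF even])
  then have "P ^ r * Gexp (H + Q * G) = P ^ r * Gexp H + F * Q"
    and "P ^ r * (Gexp H * (1 + P * G)) = P ^ r * Gexp H + F * P"
    using even_commute[OF even(2), of Q] even_commute[OF even(2), of P]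
    by (simp_all add: F_def algebra_simps)
  moreover have
    "gmult (gpow (pairing n) r)
       (gexp (gadd (fps_app h (pairing n)) (gmult (Jpairing n) (fps_app g (pairing n)))))
       = gcoeff (P ^ r * Gexp (H + Q * G))"
    "gmult (gpow (pairing n) r)
       (gmult (gexp (fps_app h (pairing n))) (gadd gone (gmult (pairing n) (fps_app g (pairing n)))))
       = gcoeff (P ^ r * (Gexp H * (1 + P * G)))"
    by (simp_all add: P_def Q_def H_def G_def times_galg.rep_eq plus_galg.rep_eq one_galg.rep_eq
        gcoeff_power gcoeff_Pairing gcoeff_JPairing Gexp.rep_eq Fps_app.rep_eq)
  ultimately show ?thesis
    using top unfolding berezin_def by (simp add: gcoeff_add)
qed

end
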